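(* Let $c>0$ be a fixed constant. Let $(u_n)_{n\ge1}$ be a sequence of positive real numbers and let $A,B>0$, $\alpha\in(0,\frac12)$ be such that for all integers $a,b\ge1$, $$u_{a+b}\le(u_a+u_b+A)+(a^{2\alpha}+b^{2\alpha})B^2+(a^\alpha+b^\alpha)B(u_a+u_b+A)^{1/2}+cu_a^{1/2}+cu_b^{1/2}.$$ Then there is a constant $c_\alpha$ depending only on $\alpha$ (and on $c$) such that $u_n\le c_\alpha(1+u_1+A+B^2)\,n$ for all $n\ge1$. *)

theory Defs
  imports Complex_Main
begin

end

theory Submission
  imports Defs
begin

text \<open>Choose \<open>\<alpha> + 1/2 \<le> \<gamma> < 1\<close> and prove by strong induction the sharper bound
  \<open>u n \<le> M (K n - D n\<^sup>\<gamma>)\<close> with \<open>M = 1 + u 1 + A + B\<^sup>2\<close>. Writing \<open>n = a + b\<close> with both parts at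
  most \<open>2n/3\<close>, concavity of \<open>x\<^sup>\<gamma>\<close> gives \<open>a\<^sup>\<gamma> + b\<^sup>\<gamma> \<ge> (1 + \<delta>) n\<^sup>\<gamma>\<close> for a fixed \<open>\<delta> > 0\<close>,
  so the subtracted terms release a surplus \<open>M D \<delta> n\<^sup>\<gamma>\<close>. All error terms of the recursion are
  \<open>O(M \<surd>K n\<^bsup>\<alpha>+1/2\<^esup>)\<close>, which this surplus absorbs once \<open>D\<close> is large compared with \<open>\<surd>K\<close>;
  \<open>K = s\<^sup>2\<close>, \<open>D = K - s\<close> achieves this for large \<open>s\<close>.\<close>

definition split_bound :: "real \<Rightarrow> real \<Rightarrow> real \<Rightarrow> real \<Rightarrow> real \<Rightarrow> real \<Rightarrow> real \<Rightarrow> real \<Rightarrow> real" where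
  "split_bound c \<alpha> A B a b x y =
     (x + y + A) + (a powr (2*\<alpha>) + b powr (2*\<alpha>)) * B^2
     + (a powr \<alpha> + b powr \<alpha>) * B * sqrt (x + y + A) + c * sqrt x + c * sqrt y"

lemma one_less_powr_of_less_one:
  fixes x y :: real
  assumes "0 < x" "x < 1" "y < 0"
  shows "1 < x powr y"
proof -
  have "x powr y = (1 / x) powr (- y)"
    using assms(1) by (simp add: powr_minus_divide powr_divide)
  moreover have "1 < (1 / x) powr (- y)"
    using assms by (intro gr_one_powr) auto
  ultimately show ?thesis by simp
qed

lemma powr_add_ge_of_balanced_split:
  fixes a b n \<theta> \<gamma> :: real
  assumes "0 < a" "0 < b" "a + b = n" "a \<le> \<theta> * n" "b \<le> \<theta> * n" "\<gamma> \<le> 1"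
  shows "\<theta> powr (\<gamma> - 1) * n powr \<gamma> \<le> a powr \<gamma> + b powr \<gamma>"
proof -
  have n: "0 < n" using assms by simp
  have "0 < \<theta> * n" using assms by linarith
  then have \<theta>: "0 < \<theta>" using n by (simp add: zero_less_mult_iff)
  have part: "x * (\<theta> * n) powr (\<gamma> - 1) \<le> x powr \<gamma>" if "0 < x" "x \<le> \<theta> * n" for x
  proof -
    have "(\<theta> * n) powr (\<gamma> - 1) \<le> x powr (\<gamma> - 1)"
      using that assms(6) by (intro powr_mono2') auto
    then have "x * (\<theta> * n) powr (\<gamma> - 1) \<le> x * x powr (\<gamma> - 1)"
      using that by (intro mult_left_mono) auto
    also have "\<dots> = x powr \<gamma>"
      using that by (simp add: powr_mult_base)
    finally show ?thesis .
  qed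
  have "\<theta> powr (\<gamma> - 1) * n powr \<gamma> = (a + b) * (\<theta> * n) powr (\<gamma> - 1)"
    using n \<theta> assms(3) by (simp add: powr_mult powr_mult_base)
  also have "\<dots> \<le> a powr \<gamma> + b powr \<gamma>"
    using part[of a] part[of b] assms(1,2,4,5) by (simp add: distrib_right)
  finally show ?thesis .
qed

lemma split_bound_error_le:
  fixes a b n x y M K A B c \<alpha> :: real
  assumes ab: "1 \<le> a" "1 \<le> b" "a + b = n"
    and xy: "0 \<le> x" "x \<le> M * K * a" "0 \<le> y" "y \<le> M * K * b"
    and M: "1 \<le> M" "0 \<le> A" "A \<le> M" "0 \<le> B" "B^2 \<le> M"
    and K: "1 \<le> K" and c: "0 \<le> c" and \<alpha>: "0 \<le> \<alpha>" "\<alpha> \<le> 1/2"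
  shows "split_bound c \<alpha> A B a b x y - (x + y)
           \<le> (7 + 2*c) * sqrt K * M * n powr (\<alpha> + 1/2)"
proof -
  define N where "N = n powr (\<alpha> + 1/2)"
  have n: "1 \<le> n" using ab by simp
  have N: "1 \<le> N" unfolding N_def using n \<alpha> by (simp add: ge_one_powr_ge_zero)
  have sqrt_n: "sqrt n \<le> N"
    unfolding N_def using n \<alpha> by (auto simp: powr_half_sqrt [symmetric] intro: powr_mono)
  have sqrt_MM: "sqrt M * sqrt M = M" using M by simp
  then have sqrt_M: "sqrt M \<le> M"
    using M mult_left_mono [of 1 "sqrt M" "sqrt M"] by simp
  have B_le: "B \<le> sqrt M" using M by (simp add: real_le_rsqrt)
  have sqrt_K: "1 \<le> sqrt K" using K by simp
  have le_n: "t powr e \<le> n powr e" if "1 \<le> t" "t \<le> n" "0 \<le> e" for t e :: real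
    using that by (intro powr_mono2) auto
  have "1 \<le> K * n" using K n mult_mono [of 1 K 1 n] by simp
  then have MKn: "M * K * a + M * K * b = M * K * n" "M \<le> M * K * n"
    using ab M mult_left_mono [of 1 "K * n" M] by (auto simp: algebra_simps)
  have "1 * M * 1 \<le> sqrt K * M * N"
    using sqrt_K M N by (intro mult_mono) auto
  then have A_term: "A \<le> sqrt K * M * N" using M by linarith
  have B2_term: "(a powr (2*\<alpha>) + b powr (2*\<alpha>)) * B^2 \<le> 2 * sqrt K * M * N"
  proof -
    have "n powr (2*\<alpha>) \<le> N" unfolding N_def using n \<alpha> by (intro powr_mono) auto
    then have "a powr (2*\<alpha>) + b powr (2*\<alpha>) \<le> 2 * N"
      using le_n [of a "2*\<alpha>"] le_n [of b "2*\<alpha>"] ab \<alpha> by simp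
    then have "(a powr (2*\<alpha>) + b powr (2*\<alpha>)) * B^2 \<le> (2 * N) * M"
      using M N by (intro mult_mono) auto
    also have "\<dots> \<le> 2 * sqrt K * M * N"
      using M N sqrt_K mult_right_mono [of 1 "sqrt K" "2 * M * N"] by (simp add: algebra_simps)
    finally show ?thesis .
  qed
  have B_term: "(a powr \<alpha> + b powr \<alpha>) * B * sqrt (x + y + A) \<le> 4 * sqrt K * M * N"
  proof -
    have "x + y + A \<le> 4 * (M * K * n)" using xy MKn M by linarith
    then have "sqrt (x + y + A) \<le> sqrt (4 * (M * K * n))"
      by (rule real_sqrt_le_mono)
    also have "\<dots> = 2 * sqrt K * sqrt M * sqrt n"
      by (simp add: real_sqrt_mult)
    finally have "sqrt (x + y + A) \<le> 2 * sqrt K * sqrt M * sqrt n" .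
    moreover have "a powr \<alpha> + b powr \<alpha> \<le> 2 * n powr \<alpha>"
      using le_n [of a \<alpha>] le_n [of b \<alpha>] ab \<alpha> by simp
    ultimately have "(a powr \<alpha> + b powr \<alpha>) * B * sqrt (x + y + A)
        \<le> (2 * n powr \<alpha>) * sqrt M * (2 * sqrt K * sqrt M * sqrt n)"
      using B_le xy M by (intro mult_mono) auto
    also have "\<dots> = 4 * sqrt K * (sqrt M * sqrt M) * (n powr \<alpha> * n powr (1/2))"
      using n by (simp add: powr_half_sqrt algebra_simps)
    also have "\<dots> = 4 * sqrt K * M * N"
      unfolding N_def sqrt_MM by (simp add: powr_add)
    finally show ?thesis .
  qed
  have sqrt_term: "c * sqrt t \<le> c * (sqrt K * M * N)" if "t \<le> M * K * n" for t
  proof -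
    have "sqrt t \<le> sqrt M * sqrt K * sqrt n"
      using that by (simp add: real_sqrt_mult [symmetric])
    also have "\<dots> \<le> M * sqrt K * N"
      using sqrt_M sqrt_n M K n by (intro mult_mono) auto
    finally show ?thesis using c by (simp add: mult_left_mono mult.commute)
  qed
  have "x \<le> M * K * n" "y \<le> M * K * n"
    using xy MKn by linarith+
  then have "c * sqrt x + c * sqrt y \<le> 2 * c * sqrt K * M * N"
    using sqrt_term [of x] sqrt_term [of y] by argo
  then show ?thesis
    using A_term B2_term B_term unfolding split_bound_def N_def by (simp add: algebra_simps)
qed

lemma split_bound_le_induction_bound:
  fixes a b n x y M K D A B c \<alpha> \<gamma> :: real
  assumes ab: "1 \<le> a" "1 \<le> b" "a + b = n" "a \<le> 2/3 * n" "b \<le> 2/3 * n"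
    and IH: "0 \<le> x" "x \<le> M * (K * a - D * a powr \<gamma>)"
            "0 \<le> y" "y \<le> M * (K * b - D * b powr \<gamma>)"
    and M: "1 \<le> M" "0 \<le> A" "A \<le> M" "0 \<le> B" "B^2 \<le> M"
    and KD: "1 \<le> K" "0 \<le> D" and c: "0 \<le> c"
    and \<gamma>: "0 \<le> \<alpha>" "\<alpha> + 1/2 \<le> \<gamma>" "\<gamma> \<le> 1"
    and surplus: "(7 + 2*c) * sqrt K \<le> D * ((2/3) powr (\<gamma> - 1) - 1)"
  shows "split_bound c \<alpha> A B a b x y \<le> M * (K * n - D * n powr \<gamma>)"
proof -
  define \<delta> where "\<delta> = (2/3::real) powr (\<gamma> - 1) - 1"
  have n: "1 \<le> n" using ab by simp
  have "M * (K * t - D * t powr \<gamma>) \<le> M * K * t" for t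
    using M KD by (simp add: right_diff_distrib mult.assoc)
  then have "x \<le> M * K * a" "y \<le> M * K * b" using IH by (blast intro: order_trans)+
  then have "split_bound c \<alpha> A B a b x y - (x + y) \<le> (7 + 2*c) * sqrt K * M * n powr (\<alpha> + 1/2)"
    using split_bound_error_le ab IH M KD c \<gamma> by simp
  also have "\<dots> \<le> (7 + 2*c) * sqrt K * M * n powr \<gamma>"
    using n \<gamma> M KD c by (intro mult_left_mono powr_mono) auto
  also have "\<dots> \<le> M * D * \<delta> * n powr \<gamma>"
    using surplus M unfolding \<delta>_def by (intro mult_right_mono) (auto simp: mult.commute mult.left_commute)
  finally have error: "split_bound c \<alpha> A B a b x y - (x + y) \<le> M * D * \<delta> * n powr \<gamma>" .
  have "(1 + \<delta>) * n powr \<gamma> \<le> a powr \<gamma> + b powr \<gamma>"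
    using powr_add_ge_of_balanced_split [of a b n "2/3" \<gamma>] ab \<gamma> unfolding \<delta>_def by simp
  then have "M * D * ((1 + \<delta>) * n powr \<gamma>) \<le> M * D * (a powr \<gamma> + b powr \<gamma>)"
    using M KD by (intro mult_left_mono) auto
  moreover have "x + y \<le> M * (K * a - D * a powr \<gamma>) + M * (K * b - D * b powr \<gamma>)"
    using IH by linarith
  moreover have "\<dots> = M * K * n - M * D * (a powr \<gamma> + b powr \<gamma>)"
    unfolding ab(3) [symmetric] by (simp add: algebra_simps)
  ultimately show ?thesis
    using error by (simp add: algebra_simps)
qed

lemma superlinear_deficit_bound:
  fixes u :: "nat \<Rightarrow> real" and M K D A B c \<alpha> \<gamma> :: real
  assumes pos: "\<And>n. 1 \<le> n \<Longrightarrow> 0 < u n"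
    and rec: "\<And>a b. 1 \<le> a \<Longrightarrow> 1 \<le> b \<Longrightarrow>
                u (a + b) \<le> split_bound c \<alpha> A B (real a) (real b) (u a) (u b)"
    and M: "u 1 \<le> M" "1 \<le> M" "0 \<le> A" "A \<le> M" "0 \<le> B" "B^2 \<le> M"
    and KD: "1 \<le> K" "0 \<le> D" "1 \<le> K - D" and c: "0 \<le> c"
    and \<gamma>: "0 \<le> \<alpha>" "\<alpha> + 1/2 \<le> \<gamma>" "\<gamma> \<le> 1"
    and surplus: "(7 + 2*c) * sqrt K \<le> D * ((2/3) powr (\<gamma> - 1) - 1)"
    and n: "1 \<le> n"
  shows "u n \<le> M * (K * real n - D * real n powr \<gamma>)"
  using n
proof (induction n rule: less_induct)
  case (less n)
  show ?case
  proof (cases "n = 1")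
    case True
    then show ?thesis
      using M KD mult_left_mono [of 1 "K - D" M] by (simp add: algebra_simps)
  next
    case False
    define a where "a = n div 2"
    define b where "b = n - a"
    have split: "1 \<le> a" "1 \<le> b" "a < n" "b < n" "a + b = n" "3 * a \<le> 2 * n" "3 * b \<le> 2 * n"
      using False less.prems unfolding a_def b_def by auto
    then have real_split: "1 \<le> real a" "1 \<le> real b" "real a + real b = real n"
        "real a \<le> 2/3 * real n" "real b \<le> 2/3 * real n"
      by (auto simp flip: of_nat_add)
    have "u n \<le> split_bound c \<alpha> A B (real a) (real b) (u a) (u b)"
      using rec [of a b] split by simp
    also have "\<dots> \<le> M * (K * real n - D * real n powr \<gamma>)"
      using split_bound_le_induction_bound [OF real_split] less.IH [of a] less.IH [of b]
        pos [of a] pos [of b] split M KD c \<gamma> surplus by simp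
    finally show ?thesis .
  qed
qed

lemma exists_coefficients_with_surplus:
  fixes P \<delta> :: real
  assumes "0 \<le> P" "0 < \<delta>"
  obtains K D where "1 \<le> K" "0 \<le> D" "1 \<le> K - D" "P * sqrt K \<le> D * \<delta>"
proof
  define s where "s = P / \<delta> + 1"
  have s: "1 \<le> s" unfolding s_def using assms by simp
  show "1 \<le> s^2" using s by (simp add: one_le_power)
  show "0 \<le> P * s / \<delta>" using assms s by simp
  show "1 \<le> s^2 - P * s / \<delta>"
    using s unfolding s_def by (simp add: power2_eq_square field_simps)
  show "P * sqrt (s^2) \<le> P * s / \<delta> * \<delta>"
    using s assms by simp
qed

theorem mainTheorem13:
  fixes c :: real and \<alpha> :: real
  assumes "c > 0" and "0 < \<alpha>" and "\<alpha> < 1/2"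
  shows "\<exists>C::real. \<forall>(u::nat \<Rightarrow> real) (A::real) (B::real).
           ((\<forall>n\<ge>1. u n > 0) \<and> A > 0 \<and> B > 0 \<and>
            (\<forall>a b::nat. a \<ge> 1 \<longrightarrow> b \<ge> 1 \<longrightarrow>
               u (a + b) \<le> (u a + u b + A)
                 + (real a powr (2*\<alpha>) + real b powr (2*\<alpha>)) * B^2
                 + (real a powr \<alpha> + real b powr \<alpha>) * B * sqrt (u a + u b + A)
                 + c * sqrt (u a) + c * sqrt (u b)))
           \<longrightarrow> (\<forall>n::nat. n \<ge> 1 \<longrightarrow> u n \<le> C * (1 + u 1 + A + B^2) * real n)"
proof -
  define \<gamma> where "\<gamma> = \<alpha>/2 + 3/4"
  have \<gamma>: "0 \<le> \<alpha>" "\<alpha> + 1/2 \<le> \<gamma>" "\<gamma> \<le> 1" "\<gamma> < 1"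
    using assms unfolding \<gamma>_def by auto
  have "0 \<le> 7 + 2*c" using assms by simp
  moreover have "0 < (2/3::real) powr (\<gamma> - 1) - 1"
    using one_less_powr_of_less_one [of "2/3" "\<gamma> - 1"] \<gamma> by simp
  ultimately obtain K D where KD: "1 \<le> K" "0 \<le> D" "1 \<le> K - D"
    and surplus: "(7 + 2*c) * sqrt K \<le> D * ((2/3) powr (\<gamma> - 1) - 1)"
    by (rule exists_coefficients_with_surplus)
  show ?thesis
  proof (intro exI allI impI)
    fix u :: "nat \<Rightarrow> real" and A B :: real and n :: nat
    assume hyps: "(\<forall>n\<ge>1. u n > 0) \<and> A > 0 \<and> B > 0 \<and> (\<forall>a b::nat. a \<ge> 1 \<longrightarrow> b \<ge> 1 \<longrightarrow>
               u (a + b) \<le> (u a + u b + A)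
                 + (real a powr (2*\<alpha>) + real b powr (2*\<alpha>)) * B^2
                 + (real a powr \<alpha> + real b powr \<alpha>) * B * sqrt (u a + u b + A)
                 + c * sqrt (u a) + c * sqrt (u b))"
      and n: "n \<ge> 1"
    define M where "M = 1 + u 1 + A + B^2"
    have M: "u 1 \<le> M" "1 \<le> M" "A \<le> M" "B^2 \<le> M"
      using hyps unfolding M_def by auto
    have "u n \<le> M * (K * real n - D * real n powr \<gamma>)"
      using superlinear_deficit_bound [of u c \<alpha> A B M K D \<gamma> n] hyps n M KD \<gamma> surplus assms
      unfolding split_bound_def by auto
    also have "\<dots> \<le> M * (K * real n)"
      using M KD by (intro mult_left_mono) auto
    finally show "u n \<le> K * (1 + u 1 + A + B^2) * real n" unfolding M_def by (simp add: ac_simps)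
  qed
qed

end
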